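(* Let $\{E_n\}_{n\ge1}$ be a sequence of diagonal projections such that $\sum_{n\ge1}E_n=I+K$ for some compact operator $K$ (the series converging in the weak, equivalently strong, operator topology). Then there exists an integer $n_0\ge1$ such that: (i) $E_nE_m=\delta_{nm}E_n$ for all $m,n>n_0$; (ii) $E_nE_m$ is a finite-rank projection for all $1\le m,n\le n_0$ with $m\ne n$; (iii) for each $N\ge n_0$, $E^{(N)}=\sum_{n>N}E_n$ is a diagonal projection and $E^{(N)}E_n=0$ for all $n=1,\dots,N$.
   Context: $\mathcal{H}$ is a separable infinite-dimensional complex Hilbert space with a fixed orthonormal basis $\{e_n\}_{n\ge1}$; $\mathcal{D}$ is the algebra of operators diagonal with respect to this basis; a diagonal projection is an orthogonal projection belonging to $\mathcal{D}$. *)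

theory Defs
  imports Complex_Main
begin

text \<open>Concrete model of the separable Hilbert space H = l2(nat) with the
standard orthonormal basis e_k (k :: nat); vectors are square-summable
sequences nat => complex. Operators are maps on sequences, only their
behaviour on l2 is relevant.\<close>

type_synonym vec = "nat \<Rightarrow> complex"
type_synonym hop = "vec \<Rightarrow> vec"

definition l2 :: "vec set" where
  "l2 = {x. summable (\<lambda>k. (cmod (x k))\<^sup>2)}"

definition l2norm :: "vec \<Rightarrow> real" where
  "l2norm x = sqrt (\<Sum>k. (cmod (x k))\<^sup>2)"

definition l2inner :: "vec \<Rightarrow> vec \<Rightarrow> complex" where
  "l2inner x y = (\<Sum>k. x k * cnj (y k))"

definition is_bounded_op :: "hop \<Rightarrow> bool" where
  "is_bounded_op T \<longleftrightarrow>
     (\<forall>x\<in>l2. T x \<in> l2) \<and>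
     (\<forall>x\<in>l2. \<forall>y\<in>l2. \<forall>a b. T (\<lambda>k. a * x k + b * y k) = (\<lambda>k. a * T x k + b * T y k)) \<and>
     (\<exists>C::real. \<forall>x\<in>l2. l2norm (T x) \<le> C * l2norm x)"

definition is_diagonal :: "hop \<Rightarrow> bool" where
  "is_diagonal T \<longleftrightarrow> is_bounded_op T \<and> (\<exists>d. \<forall>x\<in>l2. T x = (\<lambda>k. d k * x k))"

definition is_orth_proj :: "hop \<Rightarrow> bool" where
  "is_orth_proj T \<longleftrightarrow> is_bounded_op T \<and>
     (\<forall>x\<in>l2. T (T x) = T x) \<and>
     (\<forall>x\<in>l2. \<forall>y\<in>l2. l2inner (T x) y = l2inner x (T y))"

definition diag_proj :: "hop \<Rightarrow> bool" where
  "diag_proj T \<longleftrightarrow> is_diagonal T \<and> is_orth_proj T"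

definition finite_rank :: "hop \<Rightarrow> bool" where
  "finite_rank T \<longleftrightarrow> (\<exists>vs :: vec list. \<forall>x\<in>l2. \<exists>c :: nat \<Rightarrow> complex.
      T x = (\<lambda>k. \<Sum>i<length vs. c i * (vs ! i) k))"

text \<open>Compact operator: bounded linear and maps bounded sequences to sequences
with a norm-Cauchy (hence convergent, l2 being complete) subsequence.\<close>
definition compact_op :: "hop \<Rightarrow> bool" where
  "compact_op K \<longleftrightarrow> is_bounded_op K \<and>
     (\<forall>xs :: nat \<Rightarrow> vec. (\<forall>j. xs j \<in> l2) \<and> (\<exists>B::real. \<forall>j. l2norm (xs j) \<le> B) \<longrightarrow>
        (\<exists>r::nat\<Rightarrow>nat. strict_mono r \<and>
           (\<forall>e::real>0. \<exists>M::nat. \<forall>i\<ge>M. \<forall>j\<ge>M. l2norm (\<lambda>k. K (xs (r i)) k - K (xs (r j)) k) < e)))"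

end

theory Submission
  imports Defs "HOL-Analysis.Analysis"
begin

text \<open>A diagonal projection is multiplication by the indicator of a set of basis indices, its
support. Evaluating the weak sum at \<open>\<langle>\<cdot> e\<^sub>k, e\<^sub>k\<rangle>\<close> shows that every index \<open>k\<close> lies in
only finitely many supports, their number being \<open>1 + \<langle>K e\<^sub>k, e\<^sub>k\<rangle>\<close>. The diagonal of a
compact operator tends to zero, so this integer is eventually \<open>1\<close>: beyond some \<open>k\<^sub>0\<close>
the supports are pairwise disjoint. Only finitely many supports meet \<open>{..<k\<^sub>0}\<close>, and
past them all supports are disjoint from each other and from the earlier ones, while two
of the earlier supports overlap only below \<open>k\<^sub>0\<close>.\<close>

definition basis_vec :: "nat \<Rightarrow> nat \<Rightarrow> complex" where
  "basis_vec k = (\<lambda>j. if j = k then 1 else 0)"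

definition vec_restrict :: "nat set \<Rightarrow> (nat \<Rightarrow> complex) \<Rightarrow> nat \<Rightarrow> complex" where
  "vec_restrict S x = (\<lambda>k. if k \<in> S then x k else 0)"

definition diag_support :: "hop \<Rightarrow> nat set" where
  "diag_support T = {k. T (basis_vec k) k = 1}"

lemma basis_vec_same [simp]: "basis_vec k k = 1"
  by (simp add: basis_vec_def)

lemma sums_norm_basis_vec: "(\<lambda>j. (cmod (basis_vec k j))\<^sup>2) sums 1"
proof -
  have "(\<lambda>j. (cmod (basis_vec k j))\<^sup>2) = (\<lambda>j. if j = k then 1 else 0)"
    by (auto simp: basis_vec_def)
  then show ?thesis
    using sums_single[of k "\<lambda>_. 1 :: real"] by simp
qed

lemma basis_vec_in_l2: "basis_vec k \<in> l2"
  using sums_norm_basis_vec sums_summable unfolding l2_def by blast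

lemma l2norm_basis_vec: "l2norm (basis_vec k) = 1"
  using sums_norm_basis_vec unfolding l2norm_def by (simp add: sums_iff)

lemma l2inner_basis_vec: "l2inner x (basis_vec k) = x k"
proof -
  have "(\<lambda>j. x j * cnj (basis_vec k j)) = (\<lambda>j. if j = k then x k else 0)"
    by (auto simp: basis_vec_def)
  then show ?thesis
    using sums_single[of k "\<lambda>_. x k"] by (simp add: l2inner_def sums_iff)
qed

lemma l2_lincomb:
  assumes "x \<in> l2" "y \<in> l2"
  shows "(\<lambda>k. a * x k + b * y k) \<in> l2"
proof -
  have bound: "(cmod (a * x k + b * y k))\<^sup>2
      \<le> 2 * (cmod a)\<^sup>2 * (cmod (x k))\<^sup>2 + 2 * (cmod b)\<^sup>2 * (cmod (y k))\<^sup>2" for k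
  proof -
    have "cmod (a * x k + b * y k) \<le> cmod a * cmod (x k) + cmod b * cmod (y k)"
      by (metis norm_mult norm_triangle_ineq)
    then have "(cmod (a * x k + b * y k))\<^sup>2 \<le> (cmod a * cmod (x k) + cmod b * cmod (y k))\<^sup>2"
      by (simp add: power_mono)
    also have "\<dots> \<le> 2 * (cmod a * cmod (x k))\<^sup>2 + 2 * (cmod b * cmod (y k))\<^sup>2"
      using sum_squares_bound[of "cmod a * cmod (x k)" "cmod b * cmod (y k)"]
      by (simp add: power2_sum)
    finally show ?thesis by (simp add: power_mult_distrib)
  qed
  have "summable (\<lambda>k. 2 * (cmod a)\<^sup>2 * (cmod (x k))\<^sup>2 + 2 * (cmod b)\<^sup>2 * (cmod (y k))\<^sup>2)"
    using assms unfolding l2_def by (intro summable_add summable_mult) auto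
  then show ?thesis
    unfolding l2_def mem_Collect_eq by (rule summable_comparison_test[rotated]) (use bound in auto)
qed

lemma l2_diff: "x \<in> l2 \<Longrightarrow> y \<in> l2 \<Longrightarrow> (\<lambda>k. x k - y k) \<in> l2"
  using l2_lincomb[of x y 1 "-1"] by simp

lemma norm_le_l2norm:
  assumes "x \<in> l2" shows "cmod (x k) \<le> l2norm x"
proof -
  have "(cmod (x k))\<^sup>2 \<le> (\<Sum>j. (cmod (x j))\<^sup>2)"
    using sum_le_suminf[of "\<lambda>j. (cmod (x j))\<^sup>2" "{k}"] assms by (auto simp: l2_def)
  then show ?thesis
    unfolding l2norm_def using real_le_rsqrt by auto
qed

lemma vec_restrict_in_l2: "x \<in> l2 \<Longrightarrow> vec_restrict S x \<in> l2"
  unfolding l2_def vec_restrict_def mem_Collect_eq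
  by (rule summable_comparison_test[where g = "\<lambda>k. (cmod (x k))\<^sup>2"]) auto

lemma l2norm_vec_restrict_le: "x \<in> l2 \<Longrightarrow> l2norm (vec_restrict S x) \<le> l2norm x"
  unfolding l2norm_def
  by (intro real_sqrt_le_mono suminf_le)
    (use vec_restrict_in_l2[of x S] in \<open>auto simp: vec_restrict_def l2_def\<close>)

lemma vec_restrict_vec_restrict: "vec_restrict A (vec_restrict B x) = vec_restrict (A \<inter> B) x"
  by (auto simp: vec_restrict_def)

lemma vec_restrict_empty: "vec_restrict {} x = (\<lambda>k. 0)"
  by (simp add: vec_restrict_def)

lemma diag_proj_if_restrict:
  assumes T: "\<And>x. x \<in> l2 \<Longrightarrow> T x = vec_restrict S x"
  shows "diag_proj T"
proof -
  have bounded: "is_bounded_op T"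
    unfolding is_bounded_op_def
  proof (intro conjI ballI allI exI)
    fix x assume "x \<in> l2"
    then show "T x \<in> l2" using T vec_restrict_in_l2 by simp
    show "l2norm (T x) \<le> 1 * l2norm x" using T l2norm_vec_restrict_le \<open>x \<in> l2\<close> by simp
  next
    fix x y a b assume "x \<in> l2" "y \<in> l2"
    then show "T (\<lambda>k. a * x k + b * y k) = (\<lambda>k. a * T x k + b * T y k)"
      using T l2_lincomb[of x y a b] by (auto simp: vec_restrict_def)
  qed
  have "is_diagonal T"
    unfolding is_diagonal_def
    using bounded T by (intro conjI exI[of _ "\<lambda>k. if k \<in> S then 1 else 0"]) (auto simp: vec_restrict_def)
  moreover have "is_orth_proj T"
    unfolding is_orth_proj_def
  proof (intro conjI ballI bounded)
    fix x y assume "x \<in> l2" "y \<in> l2"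
    then show "T (T x) = T x" and "l2inner (T x) y = l2inner x (T y)"
      using T vec_restrict_in_l2 by (auto simp: l2inner_def vec_restrict_def intro!: suminf_cong)
  qed
  ultimately show ?thesis by (simp add: diag_proj_def)
qed

lemma finite_rank_if_restrict:
  assumes T: "\<And>x. x \<in> l2 \<Longrightarrow> T x = vec_restrict S x" and "finite S"
  shows "finite_rank T"
proof -
  obtain K where S: "S \<subseteq> {..<K}"
    using finite_nat_bounded[OF \<open>finite S\<close>] by blast
  let ?vs = "map basis_vec [0..<K]"
  have "T x = (\<lambda>k. \<Sum>i<length ?vs. vec_restrict S x i * (?vs ! i) k)" if "x \<in> l2" for x
  proof -
    have "(\<Sum>i<length ?vs. vec_restrict S x i * (?vs ! i) k) = (\<Sum>i<K. if i = k then vec_restrict S x k else 0)" for k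
      by (rule sum.cong) (auto simp: basis_vec_def)
    also have "\<dots> k = vec_restrict S x k" for k
      using S by (auto simp: vec_restrict_def)
    finally show ?thesis using T that by auto
  qed
  then show ?thesis
    unfolding finite_rank_def by blast
qed

lemma has_sum_l2inner_restrict:
  assumes "x \<in> l2" "y \<in> l2"
  shows "((\<lambda>k. x k * cnj (y k)) has_sum l2inner (vec_restrict A x) y) A"
proof -
  define g where "g k = vec_restrict A x k * cnj (y k)" for k
  have "norm (g k) \<le> cmod (x k) * cmod (y k)" for k
    by (simp add: g_def vec_restrict_def norm_mult)
  also have "cmod (x k) * cmod (y k) \<le> (cmod (x k))\<^sup>2 + (cmod (y k))\<^sup>2" for k
    using sum_squares_bound[of "cmod (x k)" "cmod (y k)"]
      mult_nonneg_nonneg[OF norm_ge_zero norm_ge_zero, of "x k" "y k"]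
    by linarith
  finally have "norm (g k) \<le> (cmod (x k))\<^sup>2 + (cmod (y k))\<^sup>2" for k .
  moreover have "summable (\<lambda>k. (cmod (x k))\<^sup>2 + (cmod (y k))\<^sup>2)"
    using assms unfolding l2_def by (intro summable_add) auto
  ultimately have norm_summable: "summable (\<lambda>k. norm (g k))"
    by (intro summable_norm_comparison_test) auto
  then have "g sums suminf g"
    by (rule summable_sums[OF summable_norm_cancel])
  with norm_summable have "(g has_sum suminf g) UNIV"
    by (rule norm_summable_imp_has_sum)
  moreover have "suminf g = l2inner (vec_restrict A x) y"
    unfolding l2inner_def by (rule arg_cong[where f = suminf]) (simp add: g_def fun_eq_iff)
  ultimately show ?thesis
    by (subst has_sum_cong_neutral[where g = g and T = UNIV]) (auto simp: g_def vec_restrict_def)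
qed

lemma sums_l2inner_restrict_Union:
  assumes "disjoint_family B" "x \<in> l2" "y \<in> l2"
  shows "(\<lambda>n. l2inner (vec_restrict (B n) x) y) sums l2inner (vec_restrict (\<Union>n. B n) x) y"
proof -
  define f where "f k = x k * cnj (y k)" for k
  have inj: "inj_on snd (Sigma UNIV B)"
    using \<open>disjoint_family B\<close> by (auto simp: inj_on_def disjoint_family_on_def)
  have "snd ` Sigma UNIV B = (\<Union>n. B n)"
    by force
  then have "(f has_sum l2inner (vec_restrict (\<Union>n. B n) x) y) (snd ` Sigma UNIV B)"
    using has_sum_l2inner_restrict[OF assms(2,3)] unfolding f_def by simp
  then have "((f \<circ> snd) has_sum l2inner (vec_restrict (\<Union>n. B n) x) y) (Sigma UNIV B)"
    by (simp only: has_sum_reindex[OF inj])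
  moreover have "((\<lambda>k. (f \<circ> snd) (n, k)) has_sum l2inner (vec_restrict (B n) x) y) (B n)" for n
    using has_sum_l2inner_restrict[OF assms(2,3)] by (simp add: f_def)
  ultimately have "((\<lambda>n. l2inner (vec_restrict (B n) x) y) has_sum l2inner (vec_restrict (\<Union>n. B n) x) y) UNIV"
    by (rule has_sum_SigmaD)
  then show ?thesis
    by (rule has_sum_imp_sums)
qed

lemma diag_proj_eq_restrict:
  assumes "diag_proj T" "x \<in> l2"
  shows "T x = vec_restrict (diag_support T) x"
proof -
  obtain d where d: "\<And>x. x \<in> l2 \<Longrightarrow> T x = (\<lambda>k. d k * x k)"
    and bounded: "is_bounded_op T" and idem: "\<And>x. x \<in> l2 \<Longrightarrow> T (T x) = T x"
    using assms(1) unfolding diag_proj_def is_diagonal_def is_orth_proj_def by blast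
  have entry: "T (basis_vec k) k = d k" for k
    using d[OF basis_vec_in_l2] by (simp add: basis_vec_def)
  have "d k * d k = d k" for k
  proof -
    have "T (basis_vec k) \<in> l2"
      using bounded basis_vec_in_l2 unfolding is_bounded_op_def by blast
    then have "T (T (basis_vec k)) k = d k * d k"
      using d entry by simp
    then show ?thesis
      using idem[OF basis_vec_in_l2] entry by simp
  qed
  then have "d k = 0 \<or> d k = 1" for k
    by (metis mult_cancel_right1)
  then have "d k * x k = vec_restrict (diag_support T) x k" for k
    using entry by (auto simp: vec_restrict_def diag_support_def)
  then show ?thesis
    using d[OF assms(2)] by auto
qed

lemma l2_cauchy_coord_tendsto_zero:
  assumes l2: "\<And>i. u i \<in> l2"
    and cauchy: "\<forall>e>0. \<exists>M. \<forall>i\<ge>M. \<forall>j\<ge>M. l2norm (\<lambda>k. u i k - u j k) < e"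
    and t: "filterlim t sequentially sequentially"
  shows "(\<lambda>i. u i (t i)) \<longlonglongrightarrow> 0"
proof (rule LIMSEQ_I)
  fix \<epsilon> :: real assume "\<epsilon> > 0"
  obtain M where M: "\<forall>i\<ge>M. \<forall>j\<ge>M. l2norm (\<lambda>k. u i k - u j k) < \<epsilon> / 2"
    using cauchy \<open>\<epsilon> > 0\<close> half_gt_zero by blast
  have "(\<lambda>k. (cmod (u M k))\<^sup>2) \<longlonglongrightarrow> 0"
    by (rule summable_LIMSEQ_zero) (use l2[of M] in \<open>simp add: l2_def\<close>)
  from LIMSEQ_D[OF this, of "(\<epsilon> / 2)\<^sup>2"] obtain T
    where T: "\<forall>k\<ge>T. (cmod (u M k))\<^sup>2 < (\<epsilon> / 2)\<^sup>2"
    using \<open>\<epsilon> > 0\<close> by auto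
  obtain I where I: "\<forall>i\<ge>I. T \<le> t i"
    using t by (auto simp: filterlim_at_top eventually_sequentially)
  have "cmod (u i (t i)) < \<epsilon>" if "max M I \<le> i" for i
  proof -
    have "(cmod (u M (t i)))\<^sup>2 < (\<epsilon> / 2)\<^sup>2"
      using T I that by simp
    then have "cmod (u M (t i)) < \<epsilon> / 2"
      by (rule power_less_imp_less_base) (use \<open>\<epsilon> > 0\<close> in simp)
    moreover have "cmod (u i (t i) - u M (t i)) \<le> l2norm (\<lambda>k. u i k - u M k)"
      using norm_le_l2norm[OF l2_diff[OF l2 l2]] by simp
    moreover have "l2norm (\<lambda>k. u i k - u M k) < \<epsilon> / 2"
      using M that by simp
    ultimately show ?thesis
      using norm_triangle_ineq[of "u i (t i) - u M (t i)" "u M (t i)"] by simp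
  qed
  then show "\<exists>N. \<forall>i\<ge>N. norm (u i (t i) - 0) < \<epsilon>"
    by (intro exI[of _ "max M I"]) simp
qed

lemma compact_op_diagonal_tendsto_zero:
  assumes "compact_op K"
  shows "(\<lambda>k. K (basis_vec k) k) \<longlonglongrightarrow> 0"
proof (rule ccontr)
  assume "\<not> ?thesis"
  then obtain \<epsilon> where "\<epsilon> > 0" and "\<exists>\<^sub>F k in sequentially. \<epsilon> \<le> cmod (K (basis_vec k) k)"
    unfolding tendsto_iff by (auto simp: not_eventually not_less)
  then have "infinite {k. \<epsilon> \<le> cmod (K (basis_vec k) k)}"
    by (simp add: frequently_cofinite flip: cofinite_eq_sequentially)
  from infinite_enumerate[OF this] obtain s :: "nat \<Rightarrow> nat"
    where "strict_mono s \<and> (\<forall>j. s j \<in> {k. \<epsilon> \<le> cmod (K (basis_vec k) k)})" ..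
  then have s: "strict_mono s" and large: "\<epsilon> \<le> cmod (K (basis_vec (s j)) (s j))" for j
    by auto
  have "(\<forall>j. basis_vec (s j) \<in> l2) \<and> (\<exists>B. \<forall>j. l2norm (basis_vec (s j)) \<le> B)"
    using basis_vec_in_l2 l2norm_basis_vec by auto
  from assms[unfolded compact_op_def, THEN conjunct2, rule_format, OF this] obtain r :: "nat \<Rightarrow> nat"
    where r: "strict_mono r"
      and cauchy: "\<forall>e>0. \<exists>M. \<forall>i\<ge>M. \<forall>j\<ge>M.
        l2norm (\<lambda>k. K (basis_vec (s (r i))) k - K (basis_vec (s (r j))) k) < e"
    by blast
  have "(\<lambda>i. K (basis_vec (s (r i))) (s (r i))) \<longlonglongrightarrow> 0"
  proof (rule l2_cauchy_coord_tendsto_zero[OF _ cauchy])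
    show "K (basis_vec (s (r i))) \<in> l2" for i
      using assms basis_vec_in_l2 unfolding compact_op_def is_bounded_op_def by blast
    show "filterlim (\<lambda>i. s (r i)) sequentially sequentially"
      by (rule filterlim_subseq[OF strict_mono_compose[OF s r]])
  qed
  from LIMSEQ_D[OF this \<open>\<epsilon> > 0\<close>] obtain N
    where "\<forall>i\<ge>N. cmod (K (basis_vec (s (r i))) (s (r i))) < \<epsilon>"
    by auto
  then show False
    using large[of "r N"] by auto
qed

lemma sums_indicator_finite_card:
  assumes "(\<lambda>n. if n \<in> A then 1 else 0 :: complex) sums c"
  shows "finite A" and "c = of_nat (card A)"
proof -
  have "(\<lambda>n. if n \<in> A then 1 else 0 :: complex) \<longlonglongrightarrow> 0"
    using assms summable_LIMSEQ_zero sums_summable by blast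
  from LIMSEQ_D[OF this zero_less_one] obtain N
    where N: "\<And>n. n \<ge> N \<Longrightarrow> cmod (if n \<in> A then 1 else 0 :: complex) < 1"
    by auto
  have "A \<subseteq> {..<N}"
  proof
    fix n assume "n \<in> A"
    then show "n \<in> {..<N}"
      using N[of n] by (cases "N \<le> n") auto
  qed
  then show "finite A"
    by (rule finite_subset) simp
  then show "c = of_nat (card A)"
    using sums_unique2[OF assms sums_If_finite_set[where f = "\<lambda>_. 1 :: complex"]] by simp
qed

lemma eventually_eq_one_if_tendsto_one:
  fixes c :: "nat \<Rightarrow> nat"
  assumes "(\<lambda>k. of_nat (c k) :: complex) \<longlonglongrightarrow> 1"
  shows "eventually (\<lambda>k. c k = 1) sequentially"
proof -
  have "eventually (\<lambda>k. cmod (of_nat (c k) - 1 :: complex) < 1) sequentially"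
    using assms unfolding tendsto_iff dist_norm by (metis zero_less_one)
  moreover have "cmod (of_nat n - 1 :: complex) = \<bar>real n - 1\<bar>" for n
    by (metis norm_of_real of_real_1 of_real_diff of_real_of_nat_eq)
  ultimately show ?thesis
    by (auto elim!: eventually_mono simp: abs_less_iff)
qed

lemma diag_support_multiplicity:
  fixes E :: "nat \<Rightarrow> hop"
  assumes proj: "\<And>n. diag_proj (E (Suc n))"
    and sum: "\<exists>K. compact_op K \<and>
       (\<forall>x\<in>l2. \<forall>y\<in>l2. (\<lambda>n. l2inner (E (Suc n) x) y) sums l2inner (\<lambda>k. x k + K x k) y)"
  shows "finite {n. k \<in> diag_support (E (Suc n))}"
    and "eventually (\<lambda>k. card {n. k \<in> diag_support (E (Suc n))} = 1) sequentially"
proof -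
  define F where "F k = {n. k \<in> diag_support (E (Suc n))}" for k
  obtain K where K: "compact_op K"
    and sums: "\<And>x y. x \<in> l2 \<Longrightarrow> y \<in> l2 \<Longrightarrow>
      (\<lambda>n. l2inner (E (Suc n) x) y) sums l2inner (\<lambda>k. x k + K x k) y"
    using sum by blast
  have "l2inner (E (Suc n) (basis_vec k)) (basis_vec k) = (if n \<in> F k then 1 else 0)" for n k
    using diag_proj_eq_restrict[OF proj[of n] basis_vec_in_l2[of k]]
    by (simp add: l2inner_basis_vec F_def vec_restrict_def)
  moreover have "l2inner (\<lambda>j. basis_vec k j + K (basis_vec k) j) (basis_vec k) = 1 + K (basis_vec k) k" for k
    by (simp add: l2inner_basis_vec)
  ultimately have indicator: "(\<lambda>n. if n \<in> F k then 1 else 0 :: complex) sums (1 + K (basis_vec k) k)" for k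
    using sums[OF basis_vec_in_l2[of k] basis_vec_in_l2[of k]] by simp
  then show "finite {n. k \<in> diag_support (E (Suc n))}" for k
    unfolding F_def by (rule sums_indicator_finite_card)
  have "(\<lambda>k. 1 + K (basis_vec k) k) \<longlonglongrightarrow> 1 + 0"
    using compact_op_diagonal_tendsto_zero[OF K] by (rule tendsto_add[OF tendsto_const])
  then have "(\<lambda>k. of_nat (card (F k)) :: complex) \<longlonglongrightarrow> 1"
    using sums_indicator_finite_card(2)[OF indicator] by simp
  then show "eventually (\<lambda>k. card {n. k \<in> diag_support (E (Suc n))} = 1) sequentially"
    unfolding F_def by (rule eventually_eq_one_if_tendsto_one)
qed

lemma eventually_disjoint_sets:
  fixes S :: "nat \<Rightarrow> nat set"
  assumes finite: "\<And>k. finite {n. k \<in> S n}"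
    and single: "eventually (\<lambda>k. card {n. k \<in> S n} = 1) sequentially"
  obtains k0 n0 where "\<And>n m. n \<noteq> m \<Longrightarrow> S n \<inter> S m \<subseteq> {..<k0}"
    and "\<And>n m. n0 \<le> n \<Longrightarrow> n \<noteq> m \<Longrightarrow> S n \<inter> S m = {}"
proof -
  obtain k0 where k0: "\<And>k. k \<ge> k0 \<Longrightarrow> card {n. k \<in> S n} = 1"
    using single unfolding eventually_sequentially by blast
  have overlap: "S n \<inter> S m \<subseteq> {..<k0}" if "n \<noteq> m" for n m
  proof
    fix k assume "k \<in> S n \<inter> S m"
    then have "{n, m} \<subseteq> {n. k \<in> S n}"
      by auto
    then have "card {n, m} \<le> card {n. k \<in> S n}"
      by (rule card_mono[OF finite])
    then have "2 \<le> card {n. k \<in> S n}"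
      using \<open>n \<noteq> m\<close> by simp
    then show "k \<in> {..<k0}"
      using k0[of k] by (cases "k0 \<le> k") auto
  qed
  obtain n0 where n0: "(\<Union>k<k0. {n. k \<in> S n}) \<subseteq> {..<n0}"
    using finite_nat_bounded[of "\<Union>k<k0. {n. k \<in> S n}"] finite by blast
  have "S n \<inter> S m = {}" if "n0 \<le> n" "n \<noteq> m" for n m
    using overlap[OF \<open>n \<noteq> m\<close>] n0 that(1) by fastforce
  with overlap show ?thesis
    using that by blast
qed

lemma diag_supports_eventually_disjoint:
  fixes E :: "nat \<Rightarrow> hop"
  assumes proj: "\<And>n. diag_proj (E (Suc n))"
    and sum: "\<exists>K. compact_op K \<and>
       (\<forall>x\<in>l2. \<forall>y\<in>l2. (\<lambda>n. l2inner (E (Suc n) x) y) sums l2inner (\<lambda>k. x k + K x k) y)"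
  obtains k0 n0 :: nat where "1 \<le> n0"
    and "\<And>n m. 1 \<le> n \<Longrightarrow> 1 \<le> m \<Longrightarrow> n \<noteq> m \<Longrightarrow>
      diag_support (E n) \<inter> diag_support (E m) \<subseteq> {..<k0}"
    and "\<And>n m. n0 < n \<Longrightarrow> 1 \<le> m \<Longrightarrow> n \<noteq> m \<Longrightarrow>
      diag_support (E n) \<inter> diag_support (E m) = {}"
proof -
  obtain k0 n0 where
    overlap: "\<And>n m. n \<noteq> m \<Longrightarrow> diag_support (E (Suc n)) \<inter> diag_support (E (Suc m)) \<subseteq> {..<k0}"
    and disjoint: "\<And>n m. n0 \<le> n \<Longrightarrow> n \<noteq> m \<Longrightarrow>
      diag_support (E (Suc n)) \<inter> diag_support (E (Suc m)) = {}"
    using eventually_disjoint_sets[OF diag_support_multiplicity[OF proj sum]] by blast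
  have "diag_support (E n) \<inter> diag_support (E m) \<subseteq> {..<k0}" if "1 \<le> n" "1 \<le> m" "n \<noteq> m" for n m
    using overlap[of "n - 1" "m - 1"] that by (cases n; cases m) auto
  moreover have "diag_support (E n) \<inter> diag_support (E m) = {}"
    if "Suc n0 < n" "1 \<le> m" "n \<noteq> m" for n m
    using disjoint[of "n - 1" "m - 1"] that by (cases n; cases m) auto
  ultimately show ?thesis
    using that[of "Suc n0" k0] by simp
qed

lemma diag_proj_comp_eq_restrict:
  assumes "diag_proj P" "diag_proj Q" "x \<in> l2"
  shows "P (Q x) = vec_restrict (diag_support P \<inter> diag_support Q) x"
  using assms by (simp add: diag_proj_eq_restrict vec_restrict_in_l2 vec_restrict_vec_restrict)

lemma diag_proj_comp:
  assumes "diag_proj P" "diag_proj Q"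
  shows "diag_proj (\<lambda>x. P (Q x))"
  using diag_proj_if_restrict[OF diag_proj_comp_eq_restrict[OF assms]] .

lemma finite_rank_diag_proj_comp:
  assumes "diag_proj P" "diag_proj Q" "finite (diag_support P \<inter> diag_support Q)"
  shows "finite_rank (\<lambda>x. P (Q x))"
  using finite_rank_if_restrict[OF diag_proj_comp_eq_restrict[OF assms(1,2)] assms(3)] .

lemma diag_proj_tail_sum:
  fixes E :: "nat \<Rightarrow> hop"
  assumes proj: "\<And>n. n \<ge> 1 \<Longrightarrow> diag_proj (E n)"
    and disjoint: "\<And>n m. N < n \<Longrightarrow> 1 \<le> m \<Longrightarrow> n \<noteq> m \<Longrightarrow>
      diag_support (E n) \<inter> diag_support (E m) = {}"
  shows "\<exists>P. diag_proj P \<and>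
       (\<forall>x\<in>l2. \<forall>y\<in>l2. (\<lambda>n. l2inner (E (n + Suc N) x) y) sums l2inner (P x) y) \<and>
       (\<forall>n. 1 \<le> n \<and> n \<le> N \<longrightarrow> (\<forall>x\<in>l2. P (E n x) = (\<lambda>k. 0)))"
proof -
  define U where "U = (\<Union>j. diag_support (E (j + Suc N)))"
  have "disjoint_family (\<lambda>j. diag_support (E (j + Suc N)))"
    using disjoint by (auto simp: disjoint_family_on_def)
  then have "(\<lambda>n. l2inner (E (n + Suc N) x) y) sums l2inner (vec_restrict U x) y"
    if "x \<in> l2" "y \<in> l2" for x y
    using sums_l2inner_restrict_Union that proj by (simp add: U_def diag_proj_eq_restrict)
  moreover have "vec_restrict U (E n x) = (\<lambda>k. 0)" if "1 \<le> n" "n \<le> N" "x \<in> l2" for n x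
  proof -
    have "diag_support (E (j + Suc N)) \<inter> diag_support (E n) = {}" for j
      using that by (intro disjoint) auto
    then have "U \<inter> diag_support (E n) = {}"
      unfolding U_def by blast
    then show ?thesis
      using that proj by (simp add: diag_proj_eq_restrict vec_restrict_vec_restrict vec_restrict_empty)
  qed
  moreover have "diag_proj (vec_restrict U)"
    by (rule diag_proj_if_restrict) (rule refl)
  ultimately show ?thesis
    by blast
qed

theorem lemma3p5:
  fixes E :: "nat \<Rightarrow> hop"
  assumes proj: "\<And>n. n \<ge> 1 \<Longrightarrow> diag_proj (E n)"
    and sum: "\<exists>Kc. compact_op Kc \<and>
       (\<forall>x\<in>l2. \<forall>y\<in>l2. (\<lambda>n. l2inner (E (Suc n) x) y) sums l2inner (\<lambda>k. x k + Kc x k) y)"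
  shows "\<exists>n0::nat. n0 \<ge> 1 \<and>
    (\<forall>n m. n > n0 \<and> m > n0 \<longrightarrow>
       (\<forall>x\<in>l2. E n (E m x) = (if n = m then E n x else (\<lambda>k. 0)))) \<and>
    (\<forall>n m. 1 \<le> n \<and> n \<le> n0 \<and> 1 \<le> m \<and> m \<le> n0 \<and> m \<noteq> n \<longrightarrow>
       is_orth_proj (\<lambda>x. E n (E m x)) \<and> finite_rank (\<lambda>x. E n (E m x))) \<and>
    (\<forall>N\<ge>n0. \<exists>P. diag_proj P \<and>
       (\<forall>x\<in>l2. \<forall>y\<in>l2. (\<lambda>n. l2inner (E (n + Suc N) x) y) sums l2inner (P x) y) \<and>
       (\<forall>n. 1 \<le> n \<and> n \<le> N \<longrightarrow> (\<forall>x\<in>l2. P (E n x) = (\<lambda>k. 0))))"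
proof -
  have proj_Suc: "diag_proj (E (Suc n))" for n
    using proj by simp
  obtain k0 n0 :: nat where "1 \<le> n0"
    and overlap: "\<And>n m. 1 \<le> n \<Longrightarrow> 1 \<le> m \<Longrightarrow> n \<noteq> m \<Longrightarrow>
      diag_support (E n) \<inter> diag_support (E m) \<subseteq> {..<k0}"
    and disjoint: "\<And>n m. n0 < n \<Longrightarrow> 1 \<le> m \<Longrightarrow> n \<noteq> m \<Longrightarrow>
      diag_support (E n) \<inter> diag_support (E m) = {}"
    by (rule diag_supports_eventually_disjoint[OF proj_Suc sum]) (rule that)
  have late: "E n (E m x) = (if n = m then E n x else (\<lambda>k. 0))"
    if "n0 < n" "n0 < m" "x \<in> l2" for n m x
    using proj[of n] diag_proj_comp_eq_restrict[OF proj proj] disjoint[of n m] that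
    by (auto simp: diag_proj_def is_orth_proj_def vec_restrict_empty)
  have early: "is_orth_proj (\<lambda>x. E n (E m x)) \<and> finite_rank (\<lambda>x. E n (E m x))"
    if "1 \<le> n" "1 \<le> m" "n \<noteq> m" for n m
    using diag_proj_comp[OF proj proj] finite_rank_diag_proj_comp[OF proj proj]
      finite_subset[OF overlap[OF that] finite_lessThan] that
    by (simp add: diag_proj_def)
  show ?thesis
    using \<open>1 \<le> n0\<close> late early
    by (intro exI[of _ n0] conjI allI impI diag_proj_tail_sum proj disjoint) auto
qed

end
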